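(* Let $x\in\widetilde W$, $v\in\mathrm{LP}(x)$ and $(\alpha,k)\in\Delta_{\mathrm{af}}$ with $\ell(x,\alpha)=0$. If $v^{-1}\alpha\in\Phi^+$, then $s_\alpha v\in\mathrm{LP}(x)$.
   Context: Let $\Phi$ be a reduced crystallographic finite root system with fixed basis $\Delta$, positive roots $\Phi^+$, negative roots $\Phi^-=-\Phi^+$, Weyl group $W$. For $\alpha\in\Phi$, $\alpha^\vee$ is its coroot and $s_\alpha$ its reflection. Let $X_*$ be an abelian group containing $\mathbb Z\Phi^\vee$, with a bilinear pairing $\langle\cdot,\cdot\rangle:X_*\times\mathbb Z\Phi\to\mathbb Z$ extending the coroot–root pairing; $W$ acts by $s_\alpha(\mu)=\mu-\langle\mu,\alpha\rangle\alpha^\vee$. $\Phi^+(\alpha)=1$ if $\alpha\in\Phi^+$, $0$ otherwise. $\widetilde W=W\ltimes X_*$ with elements $w\varepsilon^\mu$. The set of simple affine roots is $\Delta_{\mathrm{af}}=\{(\alpha,0):\alpha\in\Delta\}\cup\{(-\theta,1):\theta\text{ the highest root of an irreducible component of }\Phi\}$. For $x=w\varepsilon^\mu$ and $\alpha\in\Phi$, $\ell(x,\alpha)=\langle\mu,\alpha\rangle+\Phi^+(\alpha)-\Phi^+(w\alpha)$, and $\mathrm{LP}(x)=\{v\in W:\ell(x,v\alpha)\ge0\ \forall\alpha\in\Phi^+\}$. *)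

theory Defs
  imports "HOL-Analysis.Analysis"
begin

definition refl :: "'v::real_inner \<Rightarrow> 'v \<Rightarrow> 'v" where
  "refl \<alpha> \<beta> = \<beta> - (2 * (\<beta> \<bullet> \<alpha>) / (\<alpha> \<bullet> \<alpha>)) *\<^sub>R \<alpha>"

definition cpair :: "'v::real_inner \<Rightarrow> 'v \<Rightarrow> real" where
  "cpair \<alpha> \<beta> = 2 * (\<beta> \<bullet> \<alpha>) / (\<alpha> \<bullet> \<alpha>)"

definition coroot :: "'v::real_inner \<Rightarrow> 'v" where
  "coroot \<alpha> = (2 / (\<alpha> \<bullet> \<alpha>)) *\<^sub>R \<alpha>"

definition root_system :: "'v::real_inner set \<Rightarrow> bool" where
  "root_system \<Phi> \<longleftrightarrow> finite \<Phi> \<and> 0 \<notin> \<Phi>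
     \<and> (\<forall>\<alpha>\<in>\<Phi>. refl \<alpha> ` \<Phi> = \<Phi>)
     \<and> (\<forall>\<alpha>\<in>\<Phi>. \<forall>\<beta>\<in>\<Phi>. cpair \<alpha> \<beta> \<in> \<int>)
     \<and> (\<forall>\<alpha>\<in>\<Phi>. \<forall>c::real. c *\<^sub>R \<alpha> \<in> \<Phi> \<longrightarrow> c = 1 \<or> c = -1)"

definition zspan :: "'v::real_vector set \<Rightarrow> 'v set" where
  "zspan S = {(\<Sum>s\<in>F. of_int (c s) *\<^sub>R s) | F c. finite F \<and> F \<subseteq> S}"

definition nonneg_comb :: "'v::real_vector set \<Rightarrow> 'v \<Rightarrow> bool" where
  "nonneg_comb \<Delta> \<beta> \<longleftrightarrow> (\<exists>c::'v \<Rightarrow> int. (\<forall>\<delta>\<in>\<Delta>. c \<delta> \<ge> 0) \<and> \<beta> = (\<Sum>\<delta>\<in>\<Delta>. of_int (c \<delta>) *\<^sub>R \<delta>))"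

definition is_basis :: "'v::real_inner set \<Rightarrow> 'v set \<Rightarrow> bool" where
  "is_basis \<Phi> \<Delta> \<longleftrightarrow> \<Delta> \<subseteq> \<Phi> \<and> independent \<Delta>
     \<and> (\<forall>\<beta>\<in>\<Phi>. nonneg_comb \<Delta> \<beta> \<or> nonneg_comb \<Delta> (-\<beta>))"

definition pos_roots :: "'v::real_inner set \<Rightarrow> 'v set \<Rightarrow> 'v set" where
  "pos_roots \<Phi> \<Delta> = {\<beta>\<in>\<Phi>. nonneg_comb \<Delta> \<beta>}"

text \<open>irreducible components: classes of the transitive closure of non-orthogonality\<close>
definition nonorth :: "'v::real_inner set \<Rightarrow> ('v \<times> 'v) set" where
  "nonorth \<Phi> = {(\<alpha>, \<beta>). \<alpha> \<in> \<Phi> \<and> \<beta> \<in> \<Phi> \<and> \<alpha> \<bullet> \<beta> \<noteq> 0}"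

definition components :: "'v::real_inner set \<Rightarrow> 'v set set" where
  "components \<Phi> = {(nonorth \<Phi>)\<^sup>* `` {\<alpha>} | \<alpha>. \<alpha> \<in> \<Phi>}"

definition highest_root :: "'v::real_inner set \<Rightarrow> 'v set \<Rightarrow> 'v \<Rightarrow> bool" where
  "highest_root \<Phi> \<Delta> \<theta> \<longleftrightarrow>
     (\<exists>C\<in>components \<Phi>. \<theta> \<in> C \<and> (\<forall>\<beta>\<in>C. nonneg_comb \<Delta> (\<theta> - \<beta>)))"

definition aff_simple :: "'v::real_inner set \<Rightarrow> 'v set \<Rightarrow> ('v \<times> int) set" where
  "aff_simple \<Phi> \<Delta> = {(\<alpha>, 0) | \<alpha>. \<alpha> \<in> \<Delta>} \<union> {(-\<theta>, 1) | \<theta>. highest_root \<Phi> \<Delta> \<theta>}"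

inductive_set weyl_group :: "'v::real_inner set \<Rightarrow> ('v \<Rightarrow> 'v) set" for \<Phi> where
  weyl_id: "id \<in> weyl_group \<Phi>"
| weyl_step: "w \<in> weyl_group \<Phi> \<Longrightarrow> \<alpha> \<in> \<Phi> \<Longrightarrow> refl \<alpha> \<circ> w \<in> weyl_group \<Phi>"

text \<open>Cocharacter data: abelian group 'x with an injective additive map emb from the
  coroot lattice into it and a bilinear pairing with the root lattice extending the
  coroot-root pairing.\<close>
definition cochar_data :: "'v::real_inner set \<Rightarrow> ('v \<Rightarrow> 'x::ab_group_add) \<Rightarrow> ('x \<Rightarrow> 'v \<Rightarrow> int) \<Rightarrow> bool" where
  "cochar_data \<Phi> emb pair \<longleftrightarrow>
     (\<forall>a\<in>zspan (coroot ` \<Phi>). \<forall>b\<in>zspan (coroot ` \<Phi>). emb (a + b) = emb a + emb b)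
   \<and> inj_on emb (zspan (coroot ` \<Phi>))
   \<and> (\<forall>\<mu> \<nu> \<beta>. pair (\<mu> + \<nu>) \<beta> = pair \<mu> \<beta> + pair \<nu> \<beta>)
   \<and> (\<forall>\<mu>. \<forall>\<beta>\<in>zspan \<Phi>. \<forall>\<gamma>\<in>zspan \<Phi>. pair \<mu> (\<beta> + \<gamma>) = pair \<mu> \<beta> + pair \<mu> \<gamma>)
   \<and> (\<forall>\<alpha>\<in>\<Phi>. \<forall>\<beta>\<in>\<Phi>. real_of_int (pair (emb (coroot \<alpha>)) \<beta>) = cpair \<alpha> \<beta>)"

text \<open>Elements of the extended affine Weyl group W semidirect X_* are pairs (w, mu) with w in W,
  standing for w eps^mu.  ell x alpha = <mu,alpha> + Phi+(alpha) - Phi+(w alpha).\<close>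
definition ell :: "('x \<Rightarrow> 'v \<Rightarrow> int) \<Rightarrow> 'v::real_inner set \<Rightarrow> 'v set \<Rightarrow> ('v \<Rightarrow> 'v) \<times> 'x \<Rightarrow> 'v \<Rightarrow> int" where
  "ell pair \<Phi> \<Delta> x \<alpha> = (case x of (w, \<mu>) \<Rightarrow>
     pair \<mu> \<alpha> + (if \<alpha> \<in> pos_roots \<Phi> \<Delta> then 1 else 0) - (if w \<alpha> \<in> pos_roots \<Phi> \<Delta> then 1 else 0))"

definition LP :: "('x \<Rightarrow> 'v \<Rightarrow> int) \<Rightarrow> 'v::real_inner set \<Rightarrow> 'v set \<Rightarrow> ('v \<Rightarrow> 'v) \<times> 'x \<Rightarrow> ('v \<Rightarrow> 'v) set" where
  "LP pair \<Phi> \<Delta> x = {v \<in> weyl_group \<Phi>. \<forall>\<alpha>\<in>pos_roots \<Phi> \<Delta>. ell pair \<Phi> \<Delta> x (v \<alpha>) \<ge> 0}"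

end

theory Submission imports Defs begin

text \<open>
  Write \<open>x = w \<epsilon>\<^sup>\<mu>\<close>. For a positive root \<open>\<beta>\<close> put \<open>\<gamma> = v \<beta>\<close>; we need \<open>\<ell>(x, s\<^sub>\<alpha> \<gamma>) \<ge> 0\<close>.
  If \<open>\<gamma> = \<alpha>\<close> this is \<open>\<ell>(x, -\<alpha>) = -\<ell>(x, \<alpha>) = 0\<close>. If \<open>\<langle>\<alpha>\<^sup>\<vee>, \<gamma>\<rangle> \<le> 0\<close>, then
  \<open>s\<^sub>\<alpha> \<gamma> = v (\<beta> - \<langle>\<alpha>\<^sup>\<vee>, \<gamma>\<rangle> v\<^sup>-\<^sup>1 \<alpha>)\<close> is \<open>v\<close> applied to a positive root, and \<open>v \<in> LP(x)\<close> applies.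
  If \<open>\<langle>\<alpha>\<^sup>\<vee>, \<gamma>\<rangle> > 0\<close>, the vanishing of \<open>\<ell>(x, \<alpha>)\<close> for the affine simple root \<open>\<alpha>\<close> makes
  \<open>\<ell>(x, \<gamma>) \<le> \<ell>(x, s\<^sub>\<alpha> \<gamma>)\<close>: for \<open>\<alpha>\<close> simple because \<open>s\<^sub>\<alpha>\<close> permutes the positive roots other
  than \<open>\<alpha>\<close>, and for \<open>\<alpha> = -\<theta>\<close> because then \<open>\<gamma>\<close> is negative and \<open>s\<^sub>\<alpha> \<gamma> = \<gamma> + \<theta>\<close> is positive.
\<close>

lemma refl_eq_cpair: "refl \<alpha> \<beta> = \<beta> - cpair \<alpha> \<beta> *\<^sub>R \<alpha>"
  by (simp add: refl_def cpair_def)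

lemma linear_refl: "linear (refl \<alpha>)"
  by (rule linearI) (auto simp: refl_def add_divide_distrib algebra_simps)

lemma refl_refl: "\<alpha> \<noteq> 0 \<Longrightarrow> refl \<alpha> (refl \<alpha> \<beta>) = \<beta>"
  by (simp add: refl_def algebra_simps)

lemma refl_self: "\<alpha> \<noteq> 0 \<Longrightarrow> refl \<alpha> \<alpha> = - \<alpha>"
  by (simp add: refl_def scaleR_2)

lemma bij_refl: "\<alpha> \<noteq> 0 \<Longrightarrow> bij (refl \<alpha>)"
  by (metis bij_betw_byWitness refl_refl subset_UNIV)

lemma independent_int_coeffs_unique:
  fixes D :: "'v::real_vector set"
  assumes "finite D" "independent D" "x \<in> D"
    and "(\<Sum>\<delta>\<in>D. of_int (a \<delta>) *\<^sub>R \<delta>) = (\<Sum>\<delta>\<in>D. of_int (b \<delta>) *\<^sub>R \<delta>)"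
  shows "a x = b x"
proof -
  have "(\<Sum>\<delta>\<in>D. real_of_int (a \<delta> - b \<delta>) *\<^sub>R \<delta>) = 0"
    using assms(4) by (simp add: scaleR_diff_left sum_subtractf)
  then have "real_of_int (a x - b x) = 0"
    by (rule real_vector.independent_explicit_finite_subsets[THEN iffD1, OF assms(2), rule_format,
        OF order_refl assms(1), of "\<lambda>\<delta>. real_of_int (a \<delta> - b \<delta>)", OF _ assms(3)])
  then show ?thesis
    by simp
qed

lemma sum_indicator_scaleR:
  fixes D :: "'v::real_vector set"
  assumes "finite D" "d \<in> D"
  shows "(\<Sum>\<delta>\<in>D. of_int (if \<delta> = d then n else 0) *\<^sub>R \<delta>) = of_int n *\<^sub>R d"
proof -
  have "(\<Sum>\<delta>\<in>D. of_int (if \<delta> = d then n else 0) *\<^sub>R \<delta>) = (\<Sum>\<delta>\<in>D. if \<delta> = d then of_int n *\<^sub>R \<delta> else 0)"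
    by (rule sum.cong) auto
  also have "\<dots> = of_int n *\<^sub>R d"
    using assms by simp
  finally show ?thesis .
qed

lemma nonneg_comb_add:
  assumes "nonneg_comb D a" "nonneg_comb D b"
  shows "nonneg_comb D (a + b)"
proof -
  obtain c where c: "\<forall>\<delta>\<in>D. c \<delta> \<ge> 0" "a = (\<Sum>\<delta>\<in>D. of_int (c \<delta>) *\<^sub>R \<delta>)"
    using assms(1) unfolding nonneg_comb_def by blast
  obtain d where d: "\<forall>\<delta>\<in>D. d \<delta> \<ge> 0" "b = (\<Sum>\<delta>\<in>D. of_int (d \<delta>) *\<^sub>R \<delta>)"
    using assms(2) unfolding nonneg_comb_def by blast
  show ?thesis
    unfolding nonneg_comb_def using c d
    by (intro exI[of _ "\<lambda>\<delta>. c \<delta> + d \<delta>"]) (simp add: scaleR_add_left sum.distrib)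
qed

lemma nonneg_comb_scaleR:
  assumes "nonneg_comb D a" "k \<ge> 0"
  shows "nonneg_comb D (of_int k *\<^sub>R a)"
proof -
  obtain c where c: "\<forall>\<delta>\<in>D. c \<delta> \<ge> 0" "a = (\<Sum>\<delta>\<in>D. of_int (c \<delta>) *\<^sub>R \<delta>)"
    using assms(1) unfolding nonneg_comb_def by blast
  show ?thesis
    unfolding nonneg_comb_def using c assms(2)
    by (intro exI[of _ "\<lambda>\<delta>. k * c \<delta>"]) (simp add: scaleR_sum_right)
qed

lemma nonneg_comb_elem: "finite D \<Longrightarrow> d \<in> D \<Longrightarrow> nonneg_comb D d"
  unfolding nonneg_comb_def
  by (rule exI[of _ "\<lambda>x. if x = d then 1 else 0"]) (simp add: sum_indicator_scaleR[of D d 1])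

lemma nonneg_comb_antisym:
  assumes "finite D" "independent D" "nonneg_comb D x" "nonneg_comb D (- x)"
  shows "x = 0"
proof -
  obtain c where c: "\<forall>\<delta>\<in>D. c \<delta> \<ge> 0" "x = (\<Sum>\<delta>\<in>D. of_int (c \<delta>) *\<^sub>R \<delta>)"
    using assms(3) unfolding nonneg_comb_def by blast
  obtain d where d: "\<forall>\<delta>\<in>D. d \<delta> \<ge> 0" "- x = (\<Sum>\<delta>\<in>D. of_int (d \<delta>) *\<^sub>R \<delta>)"
    using assms(4) unfolding nonneg_comb_def by blast
  have "(\<Sum>\<delta>\<in>D. of_int (c \<delta> + d \<delta>) *\<^sub>R \<delta>) = (\<Sum>\<delta>\<in>D. of_int 0 *\<^sub>R \<delta>)"
    using c(2) d(2) by (simp add: scaleR_add_left sum.distrib) (metis add.right_inverse)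
  then have "c \<delta> + d \<delta> = 0" if "\<delta> \<in> D" for \<delta>
    using independent_int_coeffs_unique[OF assms(1,2) that, of "\<lambda>\<delta>. c \<delta> + d \<delta>" "\<lambda>_. 0"] by simp
  then have "\<forall>\<delta>\<in>D. c \<delta> = 0"
    using c(1) d(1) by fastforce
  then show ?thesis
    using c(2) by simp
qed

lemma zspan_scaleR_of_int: "\<beta> \<in> S \<Longrightarrow> of_int n *\<^sub>R \<beta> \<in> zspan S"
  unfolding zspan_def by (rule CollectI, rule exI[of _ "{\<beta>}"], rule exI[of _ "\<lambda>_. n"]) auto

lemma zspan_superset: "\<beta> \<in> S \<Longrightarrow> \<beta> \<in> zspan S"
  using zspan_scaleR_of_int[of \<beta> S 1] by simp

lemma additive_scaleR_of_int:
  fixes p :: "'v::real_vector \<Rightarrow> int"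
  assumes add: "\<And>a b. a \<in> Z \<Longrightarrow> b \<in> Z \<Longrightarrow> p (a + b) = p a + p b"
    and multiples: "\<And>i. of_int i *\<^sub>R \<beta> \<in> Z"
  shows "p (of_int n *\<^sub>R \<beta>) = n * p \<beta>"
proof (induction n rule: int_induct[where k = 0])
  case base
  show ?case
    using add[OF multiples[of 0] multiples[of 0]] by simp
next
  case (step1 i)
  have "p (of_int (i + 1) *\<^sub>R \<beta>) = p (of_int i *\<^sub>R \<beta> + of_int 1 *\<^sub>R \<beta>)"
    by (simp add: scaleR_add_left)
  also have "\<dots> = p (of_int i *\<^sub>R \<beta>) + p \<beta>"
    using add[OF multiples[of i] multiples[of 1]] by simp
  finally show ?case
    using step1.IH by (simp add: distrib_right)
next
  case (step2 i)
  have "p (of_int i *\<^sub>R \<beta>) = p (of_int (i - 1) *\<^sub>R \<beta> + of_int 1 *\<^sub>R \<beta>)"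
    by (simp add: algebra_simps)
  also have "\<dots> = p (of_int (i - 1) *\<^sub>R \<beta>) + p \<beta>"
    using add[OF multiples[of "i - 1"] multiples[of 1]] by simp
  finally show ?case
    using step2.IH by (simp add: algebra_simps)
qed

locale based_root_datum =
  fixes \<Phi> \<Delta> :: "'v::real_inner set" and emb :: "'v \<Rightarrow> 'x::ab_group_add" and pair :: "'x \<Rightarrow> 'v \<Rightarrow> int"
  assumes root_system: "root_system \<Phi>" and basis: "is_basis \<Phi> \<Delta>" and cochar: "cochar_data \<Phi> emb pair"
begin

lemma finite_roots: "finite \<Phi>"
  using root_system unfolding root_system_def by blast

lemma zero_notin_roots: "0 \<notin> \<Phi>"
  using root_system unfolding root_system_def by blast

lemma refl_root: "\<alpha> \<in> \<Phi> \<Longrightarrow> \<beta> \<in> \<Phi> \<Longrightarrow> refl \<alpha> \<beta> \<in> \<Phi>"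
  using root_system unfolding root_system_def by blast

lemma cpair_roots_int: "\<alpha> \<in> \<Phi> \<Longrightarrow> \<beta> \<in> \<Phi> \<Longrightarrow> \<exists>n::int. cpair \<alpha> \<beta> = of_int n"
  using root_system unfolding root_system_def by (meson Ints_cases)

lemma roots_reduced: "\<alpha> \<in> \<Phi> \<Longrightarrow> c *\<^sub>R \<alpha> \<in> \<Phi> \<Longrightarrow> c = 1 \<or> c = -1"
  using root_system unfolding root_system_def by blast

lemma simple_roots_subset: "\<Delta> \<subseteq> \<Phi>"
  using basis unfolding is_basis_def by blast

lemma finite_simple_roots: "finite \<Delta>"
  using finite_roots simple_roots_subset finite_subset by blast

lemma independent_simple_roots: "independent \<Delta>"
  using basis unfolding is_basis_def by blast

lemma root_nonneg_or_nonpos: "\<beta> \<in> \<Phi> \<Longrightarrow> nonneg_comb \<Delta> \<beta> \<or> nonneg_comb \<Delta> (- \<beta>)"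
  using basis unfolding is_basis_def by blast

lemma nonneg_comb_simple_antisym: "nonneg_comb \<Delta> x \<Longrightarrow> nonneg_comb \<Delta> (- x) \<Longrightarrow> x = 0"
  using nonneg_comb_antisym[OF finite_simple_roots independent_simple_roots] .

lemma uminus_root:
  assumes "\<beta> \<in> \<Phi>"
  shows "- \<beta> \<in> \<Phi>"
proof -
  have "\<beta> \<noteq> 0"
    using assms zero_notin_roots by blast
  then show ?thesis
    using refl_root[OF assms assms] by (simp add: refl_self[OF \<open>\<beta> \<noteq> 0\<close>])
qed

lemma uminus_pos_root_iff: "\<beta> \<in> \<Phi> \<Longrightarrow> - \<beta> \<in> pos_roots \<Phi> \<Delta> \<longleftrightarrow> \<beta> \<notin> pos_roots \<Phi> \<Delta>"
  unfolding pos_roots_def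
  using root_nonneg_or_nonpos nonneg_comb_simple_antisym zero_notin_roots uminus_root by fastforce

lemma simple_root_pos: "\<delta> \<in> \<Delta> \<Longrightarrow> \<delta> \<in> pos_roots \<Phi> \<Delta>"
  using simple_roots_subset nonneg_comb_elem[OF finite_simple_roots] by (auto simp: pos_roots_def)

lemma weyl_group_elem:
  assumes "w \<in> weyl_group \<Phi>"
  shows "linear w \<and> bij w \<and> w ` \<Phi> \<subseteq> \<Phi>"
  using assms
proof induction
  case weyl_id
  then show ?case
    using linear_id bij_id by (simp add: id_def)
next
  case (weyl_step w \<alpha>)
  then have "\<alpha> \<noteq> 0"
    using zero_notin_roots by blast
  have "linear (refl \<alpha> \<circ> w)"
    using weyl_step by (intro linear_compose linear_refl) auto
  moreover have "bij (refl \<alpha> \<circ> w)"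
    using weyl_step \<open>\<alpha> \<noteq> 0\<close> by (intro bij_comp bij_refl) auto
  moreover have "(refl \<alpha> \<circ> w) ` \<Phi> \<subseteq> \<Phi>"
    using weyl_step by (auto intro: refl_root)
  ultimately show ?case
    by blast
qed

lemma weyl_linear: "w \<in> weyl_group \<Phi> \<Longrightarrow> linear w"
  using weyl_group_elem by blast

lemma weyl_root: "w \<in> weyl_group \<Phi> \<Longrightarrow> \<beta> \<in> \<Phi> \<Longrightarrow> w \<beta> \<in> \<Phi>"
  using weyl_group_elem by blast

lemma weyl_image_roots: "w \<in> weyl_group \<Phi> \<Longrightarrow> w ` \<Phi> = \<Phi>"
  using weyl_group_elem endo_inj_surj[OF finite_roots] by (metis bij_is_inj inj_on_subset subset_UNIV)

lemma pair_add: "a \<in> zspan \<Phi> \<Longrightarrow> b \<in> zspan \<Phi> \<Longrightarrow> pair \<mu> (a + b) = pair \<mu> a + pair \<mu> b"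
  using cochar unfolding cochar_data_def by blast

lemma pair_scaleR_of_int: "\<beta> \<in> \<Phi> \<Longrightarrow> pair \<mu> (of_int n *\<^sub>R \<beta>) = n * pair \<mu> \<beta>"
  by (rule additive_scaleR_of_int[OF pair_add zspan_scaleR_of_int])

lemma pair_uminus: "\<beta> \<in> \<Phi> \<Longrightarrow> pair \<mu> (- \<beta>) = - pair \<mu> \<beta>"
  using pair_scaleR_of_int[of \<beta> \<mu> "-1"] by simp

lemma pair_add_roots: "a \<in> \<Phi> \<Longrightarrow> b \<in> \<Phi> \<Longrightarrow> pair \<mu> (a + b) = pair \<mu> a + pair \<mu> b"
  using pair_add zspan_superset by blast

lemma ell_uminus:
  assumes "w \<in> weyl_group \<Phi>" "\<beta> \<in> \<Phi>"
  shows "ell pair \<Phi> \<Delta> (w, \<mu>) (- \<beta>) = - ell pair \<Phi> \<Delta> (w, \<mu>) \<beta>"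
proof -
  have "w (- \<beta>) = - w \<beta>" "w \<beta> \<in> \<Phi>"
    using assms weyl_root linear_neg[OF weyl_linear] by auto
  then show ?thesis
    using uminus_pos_root_iff[OF assms(2)] uminus_pos_root_iff pair_uminus[OF assms(2)]
    by (simp add: ell_def)
qed

lemma weyl_pos_root_add:
  assumes "w \<in> weyl_group \<Phi>" "a + of_int k *\<^sub>R b \<in> \<Phi>" "k \<ge> 0"
    and "w a \<in> pos_roots \<Phi> \<Delta>" "w b \<in> pos_roots \<Phi> \<Delta>"
  shows "w (a + of_int k *\<^sub>R b) \<in> pos_roots \<Phi> \<Delta>"
proof -
  have "w (a + of_int k *\<^sub>R b) = w a + of_int k *\<^sub>R w b"
    using weyl_linear[OF assms(1)] by (simp add: linear_add linear_scale)
  moreover have "nonneg_comb \<Delta> (w a + of_int k *\<^sub>R w b)"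
    using assms(3-5) by (intro nonneg_comb_add nonneg_comb_scaleR) (auto simp: pos_roots_def)
  ultimately show ?thesis
    using weyl_root[OF assms(1,2)] by (simp add: pos_roots_def)
qed

lemma pos_root_below_multiple_of_simple:
  assumes "\<delta> \<in> \<Delta>" "\<gamma> \<in> pos_roots \<Phi> \<Delta>" "nonneg_comb \<Delta> (of_int n *\<^sub>R \<delta> - \<gamma>)"
  shows "\<gamma> = \<delta>"
proof -
  obtain c where c: "\<forall>x\<in>\<Delta>. c x \<ge> 0" "\<gamma> = (\<Sum>x\<in>\<Delta>. of_int (c x) *\<^sub>R x)"
    using assms(2) unfolding pos_roots_def nonneg_comb_def by blast
  obtain e where e: "\<forall>x\<in>\<Delta>. e x \<ge> 0" "of_int n *\<^sub>R \<delta> - \<gamma> = (\<Sum>x\<in>\<Delta>. of_int (e x) *\<^sub>R x)"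
    using assms(3) unfolding nonneg_comb_def by blast
  have "(\<Sum>x\<in>\<Delta>. of_int (c x + e x) *\<^sub>R x) = of_int n *\<^sub>R \<delta>"
    using c(2) e(2) by (simp add: scaleR_add_left sum.distrib) (metis add_diff_cancel_left' diff_add_cancel)
  then have "c x + e x = (if x = \<delta> then n else 0)" if "x \<in> \<Delta>" for x
    using independent_int_coeffs_unique[OF finite_simple_roots independent_simple_roots that,
        of "\<lambda>x. c x + e x" "\<lambda>x. if x = \<delta> then n else 0"]
      sum_indicator_scaleR[OF finite_simple_roots assms(1)] by simp
  then have c_other: "c x = 0" if "x \<in> \<Delta>" "x \<noteq> \<delta>" for x
    using that c(1) e(1) by fastforce
  have "\<gamma> = (\<Sum>x\<in>\<Delta>. if x = \<delta> then of_int (c \<delta>) *\<^sub>R x else 0)"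
    unfolding c(2) by (rule sum.cong) (auto simp: c_other)
  also have "\<dots> = of_int (c \<delta>) *\<^sub>R \<delta>"
    using finite_simple_roots assms(1) by simp
  finally have \<gamma>_eq: "\<gamma> = of_int (c \<delta>) *\<^sub>R \<delta>" .
  have "\<delta> \<in> \<Phi>" "\<gamma> \<in> \<Phi>"
    using assms(1,2) simple_roots_subset by (auto simp: pos_roots_def)
  then have "real_of_int (c \<delta>) = 1 \<or> real_of_int (c \<delta>) = -1"
    using roots_reduced \<gamma>_eq by blast
  moreover have "\<gamma> \<noteq> - \<delta>"
    using assms(2) simple_root_pos[OF assms(1)] uminus_pos_root_iff[OF \<open>\<delta> \<in> \<Phi>\<close>] by blast
  ultimately show ?thesis
    using \<gamma>_eq by auto
qed

lemma simple_refl_pos_root: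
  assumes "\<delta> \<in> \<Delta>" "\<gamma> \<in> pos_roots \<Phi> \<Delta>" "\<gamma> \<noteq> \<delta>"
  shows "refl \<delta> \<gamma> \<in> pos_roots \<Phi> \<Delta>"
proof -
  have \<delta>: "\<delta> \<in> \<Phi>" and \<gamma>: "\<gamma> \<in> \<Phi>"
    using assms(1,2) simple_roots_subset by (auto simp: pos_roots_def)
  obtain n where n: "cpair \<delta> \<gamma> = of_int n"
    using cpair_roots_int[OF \<delta> \<gamma>] by blast
  have s: "refl \<delta> \<gamma> = \<gamma> - of_int n *\<^sub>R \<delta>" and s_root: "refl \<delta> \<gamma> \<in> \<Phi>"
    using refl_root[OF \<delta> \<gamma>] by (auto simp: refl_eq_cpair n)
  have "nonneg_comb \<Delta> (refl \<delta> \<gamma>)"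
  proof (rule ccontr)
    assume not_nonneg: "\<not> nonneg_comb \<Delta> (refl \<delta> \<gamma>)"
    then have neg: "nonneg_comb \<Delta> (of_int n *\<^sub>R \<delta> - \<gamma>)"
      using root_nonneg_or_nonpos[OF s_root] s by simp
    show False
    proof (cases "n \<ge> 0")
      case True
      then show False
        using pos_root_below_multiple_of_simple[OF assms(1,2) neg] assms(3) by blast
    next
      case False
      have "nonneg_comb \<Delta> (\<gamma> + of_int (- n) *\<^sub>R \<delta>)"
        using False assms(2) nonneg_comb_elem[OF finite_simple_roots assms(1)]
        by (intro nonneg_comb_add nonneg_comb_scaleR) (auto simp: pos_roots_def)
      with not_nonneg s show False
        by simp
    qed
  qed
  with s_root show ?thesis
    by (simp add: pos_roots_def)
qed

lemma simple_refl_pos_root_iff: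
  assumes "\<delta> \<in> \<Delta>" "\<gamma> \<in> \<Phi>" "\<gamma> \<noteq> \<delta>" "\<gamma> \<noteq> - \<delta>"
  shows "refl \<delta> \<gamma> \<in> pos_roots \<Phi> \<Delta> \<longleftrightarrow> \<gamma> \<in> pos_roots \<Phi> \<Delta>"
proof
  assume "\<gamma> \<in> pos_roots \<Phi> \<Delta>"
  then show "refl \<delta> \<gamma> \<in> pos_roots \<Phi> \<Delta>"
    using simple_refl_pos_root[OF assms(1) _ assms(3)] by blast
next
  assume refl_pos: "refl \<delta> \<gamma> \<in> pos_roots \<Phi> \<Delta>"
  show "\<gamma> \<in> pos_roots \<Phi> \<Delta>"
  proof (rule ccontr)
    assume "\<gamma> \<notin> pos_roots \<Phi> \<Delta>"
    then have "- \<gamma> \<in> pos_roots \<Phi> \<Delta>"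
      using uminus_pos_root_iff[OF assms(2)] by blast
    moreover have "- \<gamma> \<noteq> \<delta>"
      using assms(4) by auto
    ultimately have "refl \<delta> (- \<gamma>) \<in> pos_roots \<Phi> \<Delta>"
      using simple_refl_pos_root[OF assms(1)] by blast
    moreover have "refl \<delta> (- \<gamma>) = - refl \<delta> \<gamma>"
      using linear_refl linear_neg by blast
    moreover have "refl \<delta> \<gamma> \<in> \<Phi>"
      using refl_root[OF _ assms(2)] simple_roots_subset assms(1) by blast
    ultimately show False
      using refl_pos uminus_pos_root_iff by metis
  qed
qed

lemma ell_refl_simple_mono:
  assumes "w \<in> weyl_group \<Phi>" "\<delta> \<in> \<Delta>" "ell pair \<Phi> \<Delta> (w, \<mu>) \<delta> = 0"
    and "\<gamma> \<in> \<Phi>" "\<gamma> \<noteq> \<delta>" "cpair \<delta> \<gamma> = of_int n" "n \<ge> 1"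
  shows "ell pair \<Phi> \<Delta> (w, \<mu>) \<gamma> \<le> ell pair \<Phi> \<Delta> (w, \<mu>) (refl \<delta> \<gamma>)"
proof -
  define s where "s = refl \<delta> \<gamma>"
  have \<delta>: "\<delta> \<in> \<Phi>" "\<delta> \<noteq> 0"
    using assms(2) simple_roots_subset zero_notin_roots by auto
  have s_eq: "s = \<gamma> - of_int n *\<^sub>R \<delta>" and s_root: "s \<in> \<Phi>"
    unfolding s_def using refl_root[OF \<delta>(1) assms(4)] by (auto simp: refl_eq_cpair assms(6))
  have "\<gamma> \<noteq> - \<delta>"
    using assms(6,7) \<delta>(2) by (auto simp: cpair_def)
  then have pos_iff: "s \<in> pos_roots \<Phi> \<Delta> \<longleftrightarrow> \<gamma> \<in> pos_roots \<Phi> \<Delta>"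
    unfolding s_def using simple_refl_pos_root_iff[OF assms(2,4,5)] by blast
  have pair_\<gamma>: "pair \<mu> \<gamma> = pair \<mu> s + n * pair \<mu> \<delta>"
    using s_eq pair_add[OF zspan_superset[OF s_root] zspan_scaleR_of_int[OF \<delta>(1)], of \<mu> n]
      pair_scaleR_of_int[OF \<delta>(1)] by simp
  have w_pos: "w \<delta> \<in> pos_roots \<Phi> \<Delta> \<Longrightarrow> w s \<in> pos_roots \<Phi> \<Delta> \<Longrightarrow> w \<gamma> \<in> pos_roots \<Phi> \<Delta>"
    using weyl_pos_root_add[OF assms(1), of s n \<delta>] s_eq assms(4,7) by simp
  have "pair \<mu> \<delta> + 1 - (if w \<delta> \<in> pos_roots \<Phi> \<Delta> then 1 else 0) = 0"
    using assms(3) simple_root_pos[OF assms(2)] by (simp add: ell_def)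
  then consider "w \<delta> \<in> pos_roots \<Phi> \<Delta>" "pair \<mu> \<delta> = 0" | "w \<delta> \<notin> pos_roots \<Phi> \<Delta>" "pair \<mu> \<delta> = -1"
    by (cases "w \<delta> \<in> pos_roots \<Phi> \<Delta>") auto
  then show ?thesis
  proof cases
    case 1
    then show ?thesis
      unfolding s_def[symmetric] using pos_iff pair_\<gamma> w_pos by (auto simp: ell_def)
  next
    case 2
    then show ?thesis
      unfolding s_def[symmetric] using pos_iff pair_\<gamma> assms(7) by (auto simp: ell_def)
  qed
qed

lemma component_roots: "C \<in> components \<Phi> \<Longrightarrow> C \<subseteq> \<Phi>"
  unfolding components_def nonorth_def by (auto elim: rtranclE)

lemma highest_root_root: "highest_root \<Phi> \<Delta> \<theta> \<Longrightarrow> \<theta> \<in> \<Phi>"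
  unfolding highest_root_def using component_roots by blast

lemma highest_root_dominates:
  assumes "highest_root \<Phi> \<Delta> \<theta>" "\<gamma> \<in> \<Phi>" "\<theta> \<bullet> \<gamma> \<noteq> 0"
  shows "nonneg_comb \<Delta> (\<theta> - \<gamma>)"
proof -
  obtain C where C: "C \<in> components \<Phi>" "\<theta> \<in> C" "\<forall>\<beta>\<in>C. nonneg_comb \<Delta> (\<theta> - \<beta>)"
    using assms(1) unfolding highest_root_def by blast
  obtain a where C_eq: "C = (nonorth \<Phi>)\<^sup>* `` {a}"
    using C(1) unfolding components_def by blast
  have "(\<theta>, \<gamma>) \<in> nonorth \<Phi>"
    using assms highest_root_root by (simp add: nonorth_def)
  with C(2) have "\<gamma> \<in> C"
    unfolding C_eq by (blast intro: rtrancl_into_rtrancl)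
  with C(3) show ?thesis
    by blast
qed

lemma highest_root_pos:
  assumes "highest_root \<Phi> \<Delta> \<theta>"
  shows "\<theta> \<in> pos_roots \<Phi> \<Delta>"
proof -
  have \<theta>: "\<theta> \<in> \<Phi>" "\<theta> \<noteq> 0"
    using highest_root_root[OF assms] zero_notin_roots by auto
  have "nonneg_comb \<Delta> \<theta>"
  proof (rule ccontr)
    assume "\<not> nonneg_comb \<Delta> \<theta>"
    then have "nonneg_comb \<Delta> (of_int 2 *\<^sub>R (- \<theta>))"
      using root_nonneg_or_nonpos[OF \<theta>(1)] by (intro nonneg_comb_scaleR) auto
    moreover have "nonneg_comb \<Delta> (\<theta> - - \<theta>)"
      using highest_root_dominates[OF assms uminus_root[OF \<theta>(1)]] \<theta>(2) by simp
    ultimately have "\<theta> + \<theta> = 0"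
      using nonneg_comb_simple_antisym by (simp add: scaleR_2)
    then have "2 *\<^sub>R \<theta> = 0"
      by (simp only: scaleR_2)
    with \<theta>(2) show False
      by simp
  qed
  with \<theta>(1) show ?thesis
    by (simp add: pos_roots_def)
qed

lemma highest_root_dominates_refl:
  assumes "highest_root \<Phi> \<Delta> \<theta>" "\<gamma> \<in> \<Phi>" "cpair (- \<theta>) \<gamma> = of_int n" "n \<ge> 1"
  shows "nonneg_comb \<Delta> (\<theta> - (\<gamma> + of_int n *\<^sub>R \<theta>))" "nonneg_comb \<Delta> (\<theta> + \<gamma>)"
proof -
  have \<theta>: "\<theta> \<in> \<Phi>" "\<theta> \<bullet> \<theta> > 0"
    using highest_root_root[OF assms(1)] zero_notin_roots by auto
  have "refl (- \<theta>) \<gamma> = \<gamma> + of_int n *\<^sub>R \<theta>"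
    unfolding refl_eq_cpair assms(3) by simp
  then have s_root: "\<gamma> + of_int n *\<^sub>R \<theta> \<in> \<Phi>"
    using refl_root[OF uminus_root[OF \<theta>(1)] assms(2)] by simp
  have n_rel: "of_int n * (\<theta> \<bullet> \<theta>) = - 2 * (\<theta> \<bullet> \<gamma>)"
    using assms(3) \<theta>(2) by (simp add: cpair_def field_simps inner_commute)
  then have \<theta>\<gamma>: "\<theta> \<bullet> \<gamma> \<noteq> 0"
    using assms(4) \<theta>(2) by auto
  have "\<theta> \<bullet> (\<gamma> + of_int n *\<^sub>R \<theta>) \<noteq> 0"
    using n_rel \<theta>\<gamma> by (simp add: inner_add_right)
  then show "nonneg_comb \<Delta> (\<theta> - (\<gamma> + of_int n *\<^sub>R \<theta>))"
    using highest_root_dominates[OF assms(1) s_root] by blast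
  show "nonneg_comb \<Delta> (\<theta> + \<gamma>)"
    using highest_root_dominates[OF assms(1) uminus_root[OF assms(2)]] \<theta>\<gamma> by simp
qed

text \<open>Both \<open>-\<gamma>\<close> and \<open>\<gamma> + n \<theta>\<close> lie below \<open>\<theta>\<close>; together this forces \<open>n = 1\<close> and \<open>\<gamma> < 0\<close>.\<close>

lemma refl_neg_highest_root:
  assumes "highest_root \<Phi> \<Delta> \<theta>" "\<gamma> \<in> \<Phi>" "\<gamma> \<noteq> - \<theta>" "cpair (- \<theta>) \<gamma> = of_int n" "n \<ge> 1"
  shows "refl (- \<theta>) \<gamma> = \<gamma> + \<theta>" "refl (- \<theta>) \<gamma> \<in> pos_roots \<Phi> \<Delta>" "\<gamma> \<notin> pos_roots \<Phi> \<Delta>"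
proof -
  define s where "s = refl (- \<theta>) \<gamma>"
  have \<theta>: "\<theta> \<in> \<Phi>" "nonneg_comb \<Delta> \<theta>"
    using highest_root_root[OF assms(1)] highest_root_pos[OF assms(1)] by (auto simp: pos_roots_def)
  have s_eq: "s = \<gamma> + of_int n *\<^sub>R \<theta>"
    unfolding s_def refl_eq_cpair assms(4) by simp
  have s_root: "s \<in> \<Phi>"
    unfolding s_def using refl_root[OF uminus_root[OF \<theta>(1)] assms(2)] .
  note \<theta>_s = highest_root_dominates_refl(1)[OF assms(1,2,4,5), folded s_eq]
  note \<theta>_\<gamma> = highest_root_dominates_refl(2)[OF assms(1,2,4,5)]
  have \<gamma>_multiple: "\<gamma> = of_int (1 - n) *\<^sub>R \<theta>" if "nonneg_comb \<Delta> (- (\<theta> - s))"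
    using nonneg_comb_simple_antisym[OF \<theta>_s that] unfolding s_eq by (simp add: algebra_simps)
  show \<gamma>_neg: "\<gamma> \<notin> pos_roots \<Phi> \<Delta>"
  proof
    assume "\<gamma> \<in> pos_roots \<Phi> \<Delta>"
    then have "nonneg_comb \<Delta> (\<gamma> + of_int (n - 1) *\<^sub>R \<theta>)"
      using \<theta>(2) assms(5) by (intro nonneg_comb_add nonneg_comb_scaleR) (auto simp: pos_roots_def)
    then have "\<gamma> = of_int (1 - n) *\<^sub>R \<theta>"
      by (intro \<gamma>_multiple) (simp add: s_eq algebra_simps)
    then have "- \<gamma> = of_int (n - 1) *\<^sub>R \<theta>"
      by (simp add: algebra_simps)
    moreover have "nonneg_comb \<Delta> (of_int (n - 1) *\<^sub>R \<theta>)"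
      using \<theta>(2) assms(5) by (intro nonneg_comb_scaleR) auto
    ultimately have "\<gamma> = 0"
      using \<open>\<gamma> \<in> pos_roots \<Phi> \<Delta>\<close> nonneg_comb_simple_antisym by (simp add: pos_roots_def)
    with assms(2) zero_notin_roots show False
      by simp
  qed
  have "n = 1"
  proof (rule ccontr)
    assume "n \<noteq> 1"
    with assms(5) have "n - 2 \<ge> 0"
      by simp
    then have "nonneg_comb \<Delta> ((\<theta> + \<gamma>) + of_int (n - 2) *\<^sub>R \<theta>)"
      by (rule nonneg_comb_add[OF \<theta>_\<gamma> nonneg_comb_scaleR[OF \<theta>(2)]])
    then have \<gamma>_eq: "\<gamma> = of_int (1 - n) *\<^sub>R \<theta>"
      by (intro \<gamma>_multiple) (simp add: s_eq algebra_simps scaleR_2)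
    then have "real_of_int (1 - n) = 1 \<or> real_of_int (1 - n) = -1"
      using roots_reduced[OF \<theta>(1)] assms(2) by blast
    with \<open>n \<noteq> 1\<close> have "\<gamma> = - \<theta>"
      using \<gamma>_eq assms(5) by auto
    with assms(3) show False ..
  qed
  then show "refl (- \<theta>) \<gamma> = \<gamma> + \<theta>"
    using s_eq s_def by simp
  with s_root \<theta>_\<gamma> show "refl (- \<theta>) \<gamma> \<in> pos_roots \<Phi> \<Delta>"
    unfolding s_def by (simp add: pos_roots_def add.commute)
qed

lemma ell_refl_neg_highest_root_mono:
  assumes "w \<in> weyl_group \<Phi>" "highest_root \<Phi> \<Delta> \<theta>" "ell pair \<Phi> \<Delta> (w, \<mu>) (- \<theta>) = 0"
    and "\<gamma> \<in> \<Phi>" "\<gamma> \<noteq> - \<theta>" "cpair (- \<theta>) \<gamma> = of_int n" "n \<ge> 1"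
  shows "ell pair \<Phi> \<Delta> (w, \<mu>) \<gamma> \<le> ell pair \<Phi> \<Delta> (w, \<mu>) (refl (- \<theta>) \<gamma>)"
proof -
  have \<theta>: "\<theta> \<in> \<Phi>" "- \<theta> \<notin> pos_roots \<Phi> \<Delta>"
    using highest_root_root[OF assms(2)] highest_root_pos[OF assms(2)] uminus_pos_root_iff by auto
  note s = refl_neg_highest_root[OF assms(2,4-7)]
  have "w (- \<theta>) \<in> pos_roots \<Phi> \<Delta> \<Longrightarrow> w (\<gamma> + \<theta>) \<in> pos_roots \<Phi> \<Delta> \<Longrightarrow> w \<gamma> \<in> pos_roots \<Phi> \<Delta>"
    using weyl_pos_root_add[OF assms(1), of "\<gamma> + \<theta>" 1 "- \<theta>"] assms(4) by simp
  moreover have "pair \<mu> \<theta> = - (if w (- \<theta>) \<in> pos_roots \<Phi> \<Delta> then 1 else 0)"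
    using assms(3) \<theta> pair_uminus[OF \<theta>(1)] by (simp add: ell_def)
  ultimately show ?thesis
    using s pair_add_roots[OF assms(4) \<theta>(1)] by (auto simp: ell_def)
qed

lemma aff_simple_cases:
  assumes "(\<alpha>, k) \<in> aff_simple \<Phi> \<Delta>"
  obtains "\<alpha> \<in> \<Delta>" | \<theta> where "\<alpha> = - \<theta>" "highest_root \<Phi> \<Delta> \<theta>"
  using assms unfolding aff_simple_def by blast

lemma aff_simple_root: "(\<alpha>, k) \<in> aff_simple \<Phi> \<Delta> \<Longrightarrow> \<alpha> \<in> \<Phi>"
  by (metis aff_simple_cases simple_roots_subset subsetD highest_root_root uminus_root)

lemma ell_refl_aff_simple_mono:
  assumes "w \<in> weyl_group \<Phi>" "(\<alpha>, k) \<in> aff_simple \<Phi> \<Delta>" "ell pair \<Phi> \<Delta> (w, \<mu>) \<alpha> = 0"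
    and "\<gamma> \<in> \<Phi>" "\<gamma> \<noteq> \<alpha>" "cpair \<alpha> \<gamma> = of_int n" "n \<ge> 1"
  shows "ell pair \<Phi> \<Delta> (w, \<mu>) \<gamma> \<le> ell pair \<Phi> \<Delta> (w, \<mu>) (refl \<alpha> \<gamma>)"
  using assms(2)
proof (cases rule: aff_simple_cases)
  case 1
  then show ?thesis
    using ell_refl_simple_mono assms by blast
next
  case (2 \<theta>)
  then show ?thesis
    using ell_refl_neg_highest_root_mono[OF assms(1) 2(2)] assms by blast
qed

lemma refl_weyl_image_pos_root:
  assumes "v \<in> weyl_group \<Phi>" "\<alpha> \<in> \<Phi>" "inv v \<alpha> \<in> pos_roots \<Phi> \<Delta>" "\<beta> \<in> pos_roots \<Phi> \<Delta>"
    and "cpair \<alpha> (v \<beta>) = of_int n" "n \<le> 0"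
  obtains \<rho> where "\<rho> \<in> pos_roots \<Phi> \<Delta>" "v \<rho> = refl \<alpha> (v \<beta>)"
proof -
  define \<rho> where "\<rho> = \<beta> + of_int (- n) *\<^sub>R inv v \<alpha>"
  have v: "linear v" "bij v" "v ` \<Phi> = \<Phi>"
    using weyl_group_elem[OF assms(1)] weyl_image_roots[OF assms(1)] by auto
  then have "v (inv v \<alpha>) = \<alpha>"
    by (simp add: bij_is_surj surj_f_inv_f)
  then have v\<rho>: "v \<rho> = refl \<alpha> (v \<beta>)"
    unfolding \<rho>_def refl_eq_cpair assms(5) using v(1) by (simp add: linear_diff linear_scale)
  have "refl \<alpha> (v \<beta>) \<in> v ` \<Phi>"
    using refl_root[OF assms(2) weyl_root[OF assms(1)]] assms(4) v(3) by (simp add: pos_roots_def)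
  then have "\<rho> \<in> \<Phi>"
    using v\<rho> v(2) by (metis bij_is_inj image_iff injD)
  moreover have "nonneg_comb \<Delta> \<rho>"
    unfolding \<rho>_def using assms(3,4,6)
    by (intro nonneg_comb_add nonneg_comb_scaleR) (auto simp: pos_roots_def)
  ultimately show ?thesis
    using that v\<rho> by (simp add: pos_roots_def)
qed

theorem refl_comp_in_LP:
  assumes "w \<in> weyl_group \<Phi>" "v \<in> LP pair \<Phi> \<Delta> (w, \<mu>)" "(\<alpha>, k) \<in> aff_simple \<Phi> \<Delta>"
    and "ell pair \<Phi> \<Delta> (w, \<mu>) \<alpha> = 0" "inv v \<alpha> \<in> pos_roots \<Phi> \<Delta>"
  shows "refl \<alpha> \<circ> v \<in> LP pair \<Phi> \<Delta> (w, \<mu>)"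
proof -
  have v: "v \<in> weyl_group \<Phi>" "\<And>\<beta>. \<beta> \<in> pos_roots \<Phi> \<Delta> \<Longrightarrow> ell pair \<Phi> \<Delta> (w, \<mu>) (v \<beta>) \<ge> 0"
    using assms(2) unfolding LP_def by auto
  have \<alpha>: "\<alpha> \<in> \<Phi>"
    using aff_simple_root[OF assms(3)] .
  have "ell pair \<Phi> \<Delta> (w, \<mu>) (refl \<alpha> (v \<beta>)) \<ge> 0" if \<beta>: "\<beta> \<in> pos_roots \<Phi> \<Delta>" for \<beta>
  proof -
    have v\<beta>: "v \<beta> \<in> \<Phi>"
      using weyl_root[OF v(1)] \<beta> by (simp add: pos_roots_def)
    obtain n where n: "cpair \<alpha> (v \<beta>) = of_int n"
      using cpair_roots_int[OF \<alpha> v\<beta>] by blast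
    consider "v \<beta> = \<alpha>" | "n \<le> 0" | "v \<beta> \<noteq> \<alpha>" "n \<ge> 1"
      by linarith
    then show ?thesis
    proof cases
      case 1
      have "\<alpha> \<noteq> 0"
        using \<alpha> zero_notin_roots by blast
      then have "refl \<alpha> (v \<beta>) = - \<alpha>"
        using 1 by (simp add: refl_self)
      then show ?thesis
        using ell_uminus[OF assms(1) \<alpha>] assms(4) by simp
    next
      case 2
      then obtain \<rho> where "\<rho> \<in> pos_roots \<Phi> \<Delta>" "v \<rho> = refl \<alpha> (v \<beta>)"
        using refl_weyl_image_pos_root[OF v(1) \<alpha> assms(5) \<beta> n] by blast
      then show ?thesis
        using v(2) by metis
    next
      case 3
      then show ?thesis
        using ell_refl_aff_simple_mono[OF assms(1,3,4) v\<beta> _ n] v(2)[OF \<beta>] by simp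
    qed
  qed
  moreover have "refl \<alpha> \<circ> v \<in> weyl_group \<Phi>"
    using v(1) \<alpha> by (rule weyl_step)
  ultimately show ?thesis
    by (simp add: LP_def)
qed

end

theorem corollary4p6:
  fixes \<Phi> \<Delta> :: "'v::real_inner set"
    and emb :: "'v \<Rightarrow> 'x::ab_group_add"
    and pair :: "'x \<Rightarrow> 'v \<Rightarrow> int"
    and w v :: "'v \<Rightarrow> 'v" and \<mu> :: 'x and \<alpha> :: 'v and k :: int
  assumes "root_system \<Phi>"
    and "is_basis \<Phi> \<Delta>"
    and "cochar_data \<Phi> emb pair"
    and "w \<in> weyl_group \<Phi>"
    and "v \<in> LP pair \<Phi> \<Delta> (w, \<mu>)"
    and "(\<alpha>, k) \<in> aff_simple \<Phi> \<Delta>"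
    and "ell pair \<Phi> \<Delta> (w, \<mu>) \<alpha> = 0"
    and "inv v \<alpha> \<in> pos_roots \<Phi> \<Delta>"
  shows "refl \<alpha> \<circ> v \<in> LP pair \<Phi> \<Delta> (w, \<mu>)"
proof -
  interpret based_root_datum \<Phi> \<Delta> emb pair
    using assms(1-3) by unfold_locales
  show ?thesis
    using refl_comp_in_LP assms(4-8) .
qed

end
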